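(* Let $q>1$ be prime and $0<j\le q$. Then $\bar{\mathsf{L}}^j_q$ is the unique logic strongly maximal with respect to $\mathsf{CPL}$ that extends $\mathsf{L}^j_q$; in fact, $\bar{\mathsf{L}}^j_q$ is the only finitary structural logic $L$ with ${\vDash_{\mathsf{L}^j_q}}\subsetneq{\vdash_L}\subsetneq{\vDash_{\mathsf{CPL}}}$.
   Context: $\mathbf{ŁV}_{n+1}=(\{0,\frac1n,\dots,1\},\neg,\to)$ with $\neg x=1-x$, $x\to y=\min\{1,1-x+y\}$. $F_{j/q}=\{x:x\ge j/q\}$; $\mathsf{L}^j_q=\langle\mathbf{ŁV}_{q+1},F_{j/q}\rangle$; $\bar{\mathsf{L}}^j_q=\langle\mathbf{ŁV}_{q+1}\times\mathbf{ŁV}_2,F_{j/q}\times\{1\}\rangle$; $\mathsf{CPL}=\langle\mathbf{ŁV}_2,\{1\}\rangle$. Matrix consequence: every evaluation sending the premises into the designated set sends the conclusion into it. $L_1$ is strongly maximal w.r.t. $L_2$ if ${\vdash_{L_1}}\subsetneq{\vdash_{L_2}}$ and adding to $L_1$ (as a structural rule, closed under substitution) any finitary rule valid in $L_2$ but not in $L_1$ yields exactly $L_2$. *)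

theory Defs
  imports Complex_Main "HOL-Computational_Algebra.Primes"
begin

datatype fm = Var nat | Neg fm | Imp fm fm

fun subst :: "(nat \<Rightarrow> fm) \<Rightarrow> fm \<Rightarrow> fm" where
  "subst \<sigma> (Var n) = \<sigma> n"
| "subst \<sigma> (Neg a) = Neg (subst \<sigma> a)"
| "subst \<sigma> (Imp a b) = Imp (subst \<sigma> a) (subst \<sigma> b)"

type_synonym logic = "fm set \<Rightarrow> fm \<Rightarrow> bool"

definition consequence_relation :: "logic \<Rightarrow> bool" where
  "consequence_relation L \<longleftrightarrow>
     (\<forall>\<Gamma> \<phi>. \<phi> \<in> \<Gamma> \<longrightarrow> L \<Gamma> \<phi>) \<and>
     (\<forall>\<Gamma> \<Delta> \<phi>. L \<Gamma> \<phi> \<and> \<Gamma> \<subseteq> \<Delta> \<longrightarrow> L \<Delta> \<phi>) \<and>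
     (\<forall>\<Gamma> \<Delta> \<phi>. (\<forall>\<psi>\<in>\<Delta>. L \<Gamma> \<psi>) \<and> L \<Delta> \<phi> \<longrightarrow> L \<Gamma> \<phi>)"

definition structural :: "logic \<Rightarrow> bool" where
  "structural L \<longleftrightarrow> (\<forall>\<sigma> \<Gamma> \<phi>. L \<Gamma> \<phi> \<longrightarrow> L (subst \<sigma> ` \<Gamma>) (subst \<sigma> \<phi>))"

definition finitary :: "logic \<Rightarrow> bool" where
  "finitary L \<longleftrightarrow> (\<forall>\<Gamma> \<phi>. L \<Gamma> \<phi> \<longrightarrow> (\<exists>\<Gamma>0. \<Gamma>0 \<subseteq> \<Gamma> \<and> finite \<Gamma>0 \<and> L \<Gamma>0 \<phi>))"

definition finitary_structural_logic :: "logic \<Rightarrow> bool" where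
  "finitary_structural_logic L \<longleftrightarrow> consequence_relation L \<and> structural L \<and> finitary L"

definition weaker_eq :: "logic \<Rightarrow> logic \<Rightarrow> bool" where
  "weaker_eq L1 L2 \<longleftrightarrow> (\<forall>\<Gamma> \<phi>. L1 \<Gamma> \<phi> \<longrightarrow> L2 \<Gamma> \<phi>)"

definition strictly_weaker :: "logic \<Rightarrow> logic \<Rightarrow> bool" where
  "strictly_weaker L1 L2 \<longleftrightarrow> weaker_eq L1 L2 \<and> L1 \<noteq> L2"

definition extend_by_rule :: "logic \<Rightarrow> fm set \<Rightarrow> fm \<Rightarrow> logic" where
  "extend_by_rule L \<Gamma> \<phi> = (\<lambda>\<Delta> \<psi>. \<forall>L'. consequence_relation L' \<and> structural L' \<and>
       weaker_eq L L' \<and> L' \<Gamma> \<phi> \<longrightarrow> L' \<Delta> \<psi>)"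

definition strongly_maximal :: "logic \<Rightarrow> logic \<Rightarrow> bool" where
  "strongly_maximal L1 L2 \<longleftrightarrow> strictly_weaker L1 L2 \<and>
     (\<forall>\<Gamma> \<phi>. finite \<Gamma> \<and> L2 \<Gamma> \<phi> \<and> \<not> L1 \<Gamma> \<phi> \<longrightarrow> extend_by_rule L1 \<Gamma> \<phi> = L2)"

fun eval :: "('v \<Rightarrow> 'v) \<Rightarrow> ('v \<Rightarrow> 'v \<Rightarrow> 'v) \<Rightarrow> (nat \<Rightarrow> 'v) \<Rightarrow> fm \<Rightarrow> 'v" where
  "eval ng im e (Var n) = e n"
| "eval ng im e (Neg a) = ng (eval ng im e a)"
| "eval ng im e (Imp a b) = im (eval ng im e a) (eval ng im e b)"

definition matrix_conseq :: "'v set \<Rightarrow> ('v \<Rightarrow> 'v) \<Rightarrow> ('v \<Rightarrow> 'v \<Rightarrow> 'v) \<Rightarrow> 'v set \<Rightarrow> logic" where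
  "matrix_conseq A ng im D = (\<lambda>\<Gamma> \<phi>. \<forall>e. (\<forall>n. e n \<in> A) \<longrightarrow>
       (\<forall>\<psi>\<in>\<Gamma>. eval ng im e \<psi> \<in> D) \<longrightarrow> eval ng im e \<phi> \<in> D)"

text \<open>Lukasiewicz algebra LV_{n+1} = ({0,1/n,...,1}, neg, imp).\<close>
definition LV :: "nat \<Rightarrow> rat set" where
  "LV n = {of_nat k / of_nat n | k. k \<le> n}"

definition lneg :: "rat \<Rightarrow> rat" where
  "lneg x = 1 - x"

definition limp :: "rat \<Rightarrow> rat \<Rightarrow> rat" where
  "limp x y = min 1 (1 - x + y)"

definition Fil :: "nat \<Rightarrow> nat \<Rightarrow> rat set" where
  "Fil j q = {x. x \<ge> of_nat j / of_nat q}"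

definition Lq :: "nat \<Rightarrow> nat \<Rightarrow> logic" where
  "Lq j q = matrix_conseq (LV q) lneg limp (LV q \<inter> Fil j q)"

definition Lqbar :: "nat \<Rightarrow> nat \<Rightarrow> logic" where
  "Lqbar j q = matrix_conseq (LV q \<times> LV 1)
     (\<lambda>(x, y). (lneg x, lneg y))
     (\<lambda>(x, y) (x', y'). (limp x x', limp y y'))
     ((LV q \<inter> Fil j q) \<times> {1})"

definition CPL :: logic where
  "CPL = matrix_conseq (LV 1) lneg limp {1}"

end

theory Submission
  imports Defs "HOL-Analysis.Product_Topology"
begin

text \<open>Up to isomorphism, \<open>L\<^sup>j\<^sub>q\<close> and \<open>CPL\<close> are Lukasiewicz chains on \<open>{0..Q}\<close>, and consequence in
  the product matrix \<open>bar L\<^sup>j\<^sub>q\<close> means \<open>L\<^sup>j\<^sub>q\<close>-consequence or classical unsatisfiability of the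
  premises. Since \<open>q\<close> is prime, every non-classical value generates the whole chain, so for each
  finite set \<open>W\<close> of variables there is a substitution acting like any prescribed valuation off the
  valuations classical on \<open>W\<close> and like a prescribed classical valuation on them. Instantiating with
  it a rule that an extension \<open>L\<close> of \<open>L\<^sup>j\<^sub>q\<close> has beyond \<open>L\<^sup>j\<^sub>q\<close> (resp. beyond \<open>bar L\<^sup>j\<^sub>q\<close>)
  reduces every finite rule of \<open>bar L\<^sup>j\<^sub>q\<close> (resp. of \<open>CPL\<close>) to its classical instances, so \<open>L\<close>
  contains \<open>bar L\<^sup>j\<^sub>q\<close> (resp. \<open>CPL\<close>).\<close>

section \<open>Logical matrices\<close>

fun vars :: "fm \<Rightarrow> nat set" where
  "vars (Var n) = {n}"
| "vars (Neg \<phi>) = vars \<phi>"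
| "vars (Imp \<phi> \<psi>) = vars \<phi> \<union> vars \<psi>"

lemma finite_vars: "finite (vars \<phi>)"
  by (induction \<phi>) auto

lemma eval_cong: "(\<And>n. n \<in> vars \<phi> \<Longrightarrow> e n = e' n) \<Longrightarrow> eval ng im e \<phi> = eval ng im e' \<phi>"
  by (induction \<phi>) auto

lemma eval_subst: "eval ng im e (subst \<sigma> \<phi>) = eval ng im (\<lambda>n. eval ng im e (\<sigma> n)) \<phi>"
  by (induction \<phi>) auto

lemma eval_closed:
  assumes "\<forall>x\<in>A. ng x \<in> A" "\<forall>x\<in>A. \<forall>y\<in>A. im x y \<in> A" "\<And>n. e n \<in> A"
  shows "eval ng im e \<phi> \<in> A"
  using assms by (induction \<phi>) auto

lemma matrix_conseqD:
  "matrix_conseq A ng im D \<Gamma> \<phi> \<Longrightarrow> (\<And>n. e n \<in> A) \<Longrightarrow> (\<And>\<psi>. \<psi> \<in> \<Gamma> \<Longrightarrow> eval ng im e \<psi> \<in> D)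
     \<Longrightarrow> eval ng im e \<phi> \<in> D"
  unfolding matrix_conseq_def by blast

lemma consequence_relation_matrix_conseq: "consequence_relation (matrix_conseq A ng im D)"
  unfolding consequence_relation_def matrix_conseq_def by blast

lemma structural_matrix_conseq:
  assumes ng: "\<forall>x\<in>A. ng x \<in> A" and im: "\<forall>x\<in>A. \<forall>y\<in>A. im x y \<in> A"
  shows "structural (matrix_conseq A ng im D)"
  unfolding structural_def
proof (intro allI impI)
  fix \<sigma> \<Gamma> \<phi>
  assume cons: "matrix_conseq A ng im D \<Gamma> \<phi>"
  show "matrix_conseq A ng im D (subst \<sigma> ` \<Gamma>) (subst \<sigma> \<phi>)"
    unfolding matrix_conseq_def
  proof (intro allI impI)
    fix e
    assume e: "\<forall>n. e n \<in> A" and prems: "\<forall>\<psi>\<in>subst \<sigma> ` \<Gamma>. eval ng im e \<psi> \<in> D"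
    have "eval ng im (\<lambda>n. eval ng im e (\<sigma> n)) \<phi> \<in> D"
    proof (rule matrix_conseqD[OF cons])
      show "eval ng im e (\<sigma> n) \<in> A" for n
        using e by (intro eval_closed[OF ng im]) blast
      show "eval ng im (\<lambda>n. eval ng im e (\<sigma> n)) \<psi> \<in> D" if "\<psi> \<in> \<Gamma>" for \<psi>
        using prems that by (simp add: eval_subst)
    qed
    then show "eval ng im e (subst \<sigma> \<phi>) \<in> D"
      by (simp add: eval_subst)
  qed
qed

lemma continuous_map_eval:
  assumes ng: "\<forall>x\<in>A. ng x \<in> A" and im: "\<forall>x\<in>A. \<forall>y\<in>A. im x y \<in> A"
  shows "continuous_map (product_topology (\<lambda>_. discrete_topology A) UNIV) (discrete_topology A)
           (\<lambda>e. eval ng im e \<phi>)"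
proof (induction \<phi>)
  case (Var n)
  show ?case
    using continuous_map_product_projection[where X="\<lambda>_. discrete_topology A" and I=UNIV and k=n]
    by simp
next
  case (Neg \<phi>)
  have "continuous_map (discrete_topology A) (discrete_topology A) ng"
    using ng by (simp add: Pi_iff)
  from continuous_map_compose[OF Neg this] show ?case
    by (simp add: o_def)
next
  case (Imp \<phi> \<psi>)
  have "continuous_map (discrete_topology (A \<times> A)) (discrete_topology A) (case_prod im)"
    using im by (simp add: Pi_iff)
  then have "continuous_map (prod_topology (discrete_topology A) (discrete_topology A))
      (discrete_topology A) (case_prod im)"
    by (simp only: prod_topology_discrete_topology)
  from continuous_map_compose[OF continuous_map_pairedI[OF Imp] this] show ?case
    by (simp add: o_def)
qed

lemma closedin_designated_valuations:
  assumes ng: "\<forall>x\<in>A. ng x \<in> A" and im: "\<forall>x\<in>A. \<forall>y\<in>A. im x y \<in> A"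
  shows "closedin (product_topology (\<lambda>_::nat. discrete_topology A) UNIV)
           {e. (\<forall>n. e n \<in> A) \<and> eval ng im e \<psi> \<in> B}"
proof -
  let ?X = "product_topology (\<lambda>_::nat. discrete_topology A) UNIV"
  have "closedin ?X {e \<in> topspace ?X. eval ng im e \<psi> \<in> A \<inter> B}"
    by (rule closedin_continuous_map_preimage[OF continuous_map_eval[OF ng im]]) auto
  moreover have "{e \<in> topspace ?X. eval ng im e \<psi> \<in> A \<inter> B} = {e. (\<forall>n. e n \<in> A) \<and> eval ng im e \<psi> \<in> B}"
    by (auto simp: PiE_UNIV_domain intro: eval_closed[OF ng im])
  ultimately show ?thesis
    by simp
qed

text \<open>Compactness of the valuation space \<open>A\<^sup>\<omega>\<close> (Tychonoff), in which the set of valuations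
  designating a given formula is clopen.\<close>

lemma finitary_matrix_conseq:
  assumes fin: "finite A" and ng: "\<forall>x\<in>A. ng x \<in> A" and im: "\<forall>x\<in>A. \<forall>y\<in>A. im x y \<in> A"
  shows "finitary (matrix_conseq A ng im D)"
  unfolding finitary_def
proof (intro allI impI; rule ccontr)
  fix \<Gamma> \<phi>
  assume cons: "matrix_conseq A ng im D \<Gamma> \<phi>"
    and none: "\<not> (\<exists>\<Gamma>0\<subseteq>\<Gamma>. finite \<Gamma>0 \<and> matrix_conseq A ng im D \<Gamma>0 \<phi>)"
  let ?X = "product_topology (\<lambda>_::nat. discrete_topology A) UNIV"
  define C where "C B \<psi> = {e. (\<forall>n. e n \<in> A) \<and> eval ng im e \<psi> \<in> B}" for B \<psi>
  let ?\<U> = "insert (C (- D) \<phi>) (C D ` \<Gamma>)"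
  have countermodel: "e \<in> \<Inter> (insert (C (- D) \<phi>) (C D ` \<Gamma>')) \<longleftrightarrow>
      (\<forall>n. e n \<in> A) \<and> (\<forall>\<psi>\<in>\<Gamma>'. eval ng im e \<psi> \<in> D) \<and> eval ng im e \<phi> \<notin> D" for e \<Gamma>'
    by (auto simp: C_def)
  have compact: "compact_space ?X"
    using fin by (simp add: compact_space_product_topology compact_space_discrete_topology)
  have "closedin ?X (C B \<psi>)" for B \<psi>
    unfolding C_def by (rule closedin_designated_valuations[OF ng im])
  then have "\<forall>U\<in>?\<U>. closedin ?X U"
    by blast
  moreover have "\<Inter> \<F> \<noteq> {}" if "finite \<F>" "\<F> \<subseteq> ?\<U>" for \<F>
  proof -
    have "finite (\<F> - {C (- D) \<phi>})" "\<F> - {C (- D) \<phi>} \<subseteq> C D ` \<Gamma>"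
      using that by auto
    then have "\<exists>\<Gamma>0\<subseteq>\<Gamma>. finite \<Gamma>0 \<and> \<F> - {C (- D) \<phi>} = C D ` \<Gamma>0"
      by (rule finite_subset_image)
    then obtain \<Gamma>0 where \<Gamma>0: "\<Gamma>0 \<subseteq> \<Gamma>" "finite \<Gamma>0" "\<F> - {C (- D) \<phi>} = C D ` \<Gamma>0"
      by blast
    then have "\<not> matrix_conseq A ng im D \<Gamma>0 \<phi>"
      using none by blast
    then obtain e where "\<forall>n. e n \<in> A" "\<forall>\<psi>\<in>\<Gamma>0. eval ng im e \<psi> \<in> D" "eval ng im e \<phi> \<notin> D"
      unfolding matrix_conseq_def by blast
    then have e: "e \<in> \<Inter> (insert (C (- D) \<phi>) (C D ` \<Gamma>0))"
      using countermodel[of e \<Gamma>0] by simp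
    have "\<F> \<subseteq> insert (C (- D) \<phi>) (\<F> - {C (- D) \<phi>})"
      by blast
    then have "\<F> \<subseteq> insert (C (- D) \<phi>) (C D ` \<Gamma>0)"
      by (simp only: \<Gamma>0(3))
    then have "\<Inter> (insert (C (- D) \<phi>) (C D ` \<Gamma>0)) \<subseteq> \<Inter> \<F>"
      by (rule Inter_anti_mono)
    with e show ?thesis
      by blast
  qed
  ultimately have "\<Inter> ?\<U> \<noteq> {}"
    using compact_space_fip[THEN iffD1, OF compact, THEN spec[where x="?\<U>"]] by blast
  then obtain e where "e \<in> \<Inter> ?\<U>"
    by (meson equals0I)
  then show False
    using countermodel[of e \<Gamma>] matrix_conseqD[OF cons, of e] by simp
qed

lemma finitary_structural_logic_matrix_conseq:
  assumes "finite A" "\<forall>x\<in>A. ng x \<in> A" "\<forall>x\<in>A. \<forall>y\<in>A. im x y \<in> A"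
  shows "finitary_structural_logic (matrix_conseq A ng im D)"
  unfolding finitary_structural_logic_def
  using consequence_relation_matrix_conseq structural_matrix_conseq[OF assms(2,3)]
    finitary_matrix_conseq[OF assms] by blast

definition matrix_sat :: "'v set \<Rightarrow> ('v \<Rightarrow> 'v) \<Rightarrow> ('v \<Rightarrow> 'v \<Rightarrow> 'v) \<Rightarrow> 'v set \<Rightarrow> fm set \<Rightarrow> bool" where
  "matrix_sat A ng im D \<Gamma> \<longleftrightarrow> (\<exists>e. (\<forall>n. e n \<in> A) \<and> (\<forall>\<psi>\<in>\<Gamma>. eval ng im e \<psi> \<in> D))"

lemma bij_betw_all_valuations:
  assumes h: "bij_betw h B A"
  shows "(\<forall>e. (\<forall>n::nat. e n \<in> A) \<longrightarrow> P e) \<longleftrightarrow> (\<forall>e. (\<forall>n::nat. e n \<in> B) \<longrightarrow> P (\<lambda>n. h (e n)))"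
proof
  assume all: "\<forall>e. (\<forall>n::nat. e n \<in> A) \<longrightarrow> P e"
  show "\<forall>e. (\<forall>n::nat. e n \<in> B) \<longrightarrow> P (\<lambda>n. h (e n))"
  proof (intro allI impI)
    fix e :: "nat \<Rightarrow> _"
    assume "\<forall>n. e n \<in> B"
    then have "\<forall>n. h (e n) \<in> A"
      using bij_betw_apply[OF h] by blast
    then show "P (\<lambda>n. h (e n))"
      by (rule all[THEN spec, THEN mp])
  qed
next
  assume pulled: "\<forall>e. (\<forall>n::nat. e n \<in> B) \<longrightarrow> P (\<lambda>n. h (e n))"
  show "\<forall>e. (\<forall>n::nat. e n \<in> A) \<longrightarrow> P e"
  proof (intro allI impI)
    fix e :: "nat \<Rightarrow> _"
    assume e: "\<forall>n. e n \<in> A"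
    then have "\<forall>n. inv_into B h (e n) \<in> B"
      using bij_betw_apply[OF bij_betw_inv_into[OF h]] by blast
    then have "P (\<lambda>n. h (inv_into B h (e n)))"
      by (rule pulled[THEN spec, THEN mp])
    moreover have "(\<lambda>n. h (inv_into B h (e n))) = e"
      using e by (simp add: bij_betw_inv_into_right[OF h])
    ultimately show "P e"
      by simp
  qed
qed

lemma matrix_iso:
  assumes h: "bij_betw h B A"
    and ng: "\<And>x. x \<in> B \<Longrightarrow> ng' x \<in> B \<and> h (ng' x) = ng (h x)"
    and im: "\<And>x y. x \<in> B \<Longrightarrow> y \<in> B \<Longrightarrow> im' x y \<in> B \<and> h (im' x y) = im (h x) (h y)"
    and D: "\<And>x. x \<in> B \<Longrightarrow> h x \<in> D \<longleftrightarrow> x \<in> E"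
  shows "matrix_conseq A ng im D = matrix_conseq B ng' im' E"
    and "matrix_sat A ng im D = matrix_sat B ng' im' E"
proof -
  have hom: "eval ng' im' e \<phi> \<in> B \<and> eval ng im (\<lambda>n. h (e n)) \<phi> = h (eval ng' im' e \<phi>)"
    if "\<forall>n. e n \<in> B" for e \<phi>
    using that by (induction \<phi>) (auto simp: ng im)
  have designated: "eval ng im (\<lambda>n. h (e n)) \<phi> \<in> D \<longleftrightarrow> eval ng' im' e \<phi> \<in> E"
    if "\<forall>n. e n \<in> B" for e \<phi>
    using hom[OF that] D by simp
  show "matrix_conseq A ng im D = matrix_conseq B ng' im' E"
    unfolding matrix_conseq_def bij_betw_all_valuations[OF h] by (simp add: designated)
  show "matrix_sat A ng im D = matrix_sat B ng' im' E"
  proof (intro ext)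
    fix \<Gamma>
    have "(\<forall>e. (\<forall>n. e n \<in> A) \<longrightarrow> \<not> (\<forall>\<psi>\<in>\<Gamma>. eval ng im e \<psi> \<in> D)) \<longleftrightarrow>
          (\<forall>e. (\<forall>n. e n \<in> B) \<longrightarrow> \<not> (\<forall>\<psi>\<in>\<Gamma>. eval ng' im' e \<psi> \<in> E))"
      unfolding bij_betw_all_valuations[OF h] by (simp add: designated)
    then show "matrix_sat A ng im D \<Gamma> = matrix_sat B ng' im' E \<Gamma>"
      unfolding matrix_sat_def by blast
  qed
qed

lemma eval_prod:
  "eval (\<lambda>(x, y). (ng1 x, ng2 y)) (\<lambda>(x, y) (x', y'). (im1 x x', im2 y y')) e \<phi> =
     (eval ng1 im1 (\<lambda>n. fst (e n)) \<phi>, eval ng2 im2 (\<lambda>n. snd (e n)) \<phi>)"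
  by (induction \<phi>) (auto split: prod.splits)

lemma matrix_conseq_prod_iff_components:
  "matrix_conseq (A \<times> B) (\<lambda>(x, y). (ng1 x, ng2 y)) (\<lambda>(x, y) (x', y'). (im1 x x', im2 y y')) (D \<times> E) \<Gamma> \<phi>
   \<longleftrightarrow> (\<forall>e1 e2. (\<forall>n. e1 n \<in> A) \<longrightarrow> (\<forall>n. e2 n \<in> B) \<longrightarrow>
      (\<forall>\<psi>\<in>\<Gamma>. eval ng1 im1 e1 \<psi> \<in> D \<and> eval ng2 im2 e2 \<psi> \<in> E) \<longrightarrow>
      eval ng1 im1 e1 \<phi> \<in> D \<and> eval ng2 im2 e2 \<phi> \<in> E)"
  (is "?prod \<longleftrightarrow> ?components")
proof
  assume prod: ?prod
  show ?components
  proof (intro allI impI)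
    fix e1 e2
    assume "\<forall>n. e1 n \<in> A" "\<forall>n. e2 n \<in> B"
      "\<forall>\<psi>\<in>\<Gamma>. eval ng1 im1 e1 \<psi> \<in> D \<and> eval ng2 im2 e2 \<psi> \<in> E"
    then show "eval ng1 im1 e1 \<phi> \<in> D \<and> eval ng2 im2 e2 \<phi> \<in> E"
      using matrix_conseqD[OF prod, of "\<lambda>n. (e1 n, e2 n)"] by (simp add: eval_prod)
  qed
next
  assume components: ?components
  show ?prod
    unfolding matrix_conseq_def eval_prod
  proof (intro allI impI)
    fix e :: "nat \<Rightarrow> _"
    assume "\<forall>n. e n \<in> A \<times> B"
      "\<forall>\<psi>\<in>\<Gamma>. (eval ng1 im1 (\<lambda>n. fst (e n)) \<psi>, eval ng2 im2 (\<lambda>n. snd (e n)) \<psi>) \<in> D \<times> E"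
    then show "(eval ng1 im1 (\<lambda>n. fst (e n)) \<phi>, eval ng2 im2 (\<lambda>n. snd (e n)) \<phi>) \<in> D \<times> E"
      using components[rule_format, of "\<lambda>n. fst (e n)" "\<lambda>n. snd (e n)"] by (simp add: mem_Times_iff)
  qed
qed

lemma matrix_conseq_prod:
  "matrix_conseq (A \<times> B) (\<lambda>(x, y). (ng1 x, ng2 y)) (\<lambda>(x, y) (x', y'). (im1 x x', im2 y y')) (D \<times> E) \<Gamma> \<phi>
   \<longleftrightarrow> (matrix_conseq A ng1 im1 D \<Gamma> \<phi> \<or> \<not> matrix_sat B ng2 im2 E \<Gamma>) \<and>
       (matrix_conseq B ng2 im2 E \<Gamma> \<phi> \<or> \<not> matrix_sat A ng1 im1 D \<Gamma>)"
  unfolding matrix_conseq_prod_iff_components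
  unfolding matrix_conseq_def matrix_sat_def by blast

section \<open>Lukasiewicz chains on \<open>{0..Q}\<close>\<close>

abbreviation luk_eval :: "nat \<Rightarrow> (nat \<Rightarrow> nat) \<Rightarrow> fm \<Rightarrow> nat" where
  "luk_eval Q \<equiv> eval (\<lambda>x. Q - x) (\<lambda>x y. min Q (Q - x + y))"

definition luk :: "nat \<Rightarrow> nat \<Rightarrow> logic" where
  "luk Q J = matrix_conseq {..Q} (\<lambda>x. Q - x) (\<lambda>x y. min Q (Q - x + y)) {J..}"

definition luk_sat :: "nat \<Rightarrow> nat \<Rightarrow> fm set \<Rightarrow> bool" where
  "luk_sat Q J = matrix_sat {..Q} (\<lambda>x. Q - x) (\<lambda>x y. min Q (Q - x + y)) {J..}"

lemma luk_iff:
  "luk Q J \<Gamma> \<phi> \<longleftrightarrow>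
     (\<forall>e. (\<forall>n. e n \<le> Q) \<longrightarrow> (\<forall>\<psi>\<in>\<Gamma>. J \<le> luk_eval Q e \<psi>) \<longrightarrow> J \<le> luk_eval Q e \<phi>)"
  by (simp add: luk_def matrix_conseq_def)

lemma luk_sat_iff: "luk_sat Q J \<Gamma> \<longleftrightarrow> (\<exists>e. (\<forall>n. e n \<le> Q) \<and> (\<forall>\<psi>\<in>\<Gamma>. J \<le> luk_eval Q e \<psi>))"
  by (simp add: luk_sat_def matrix_sat_def)

lemma luk_eval_le: "\<forall>n. e n \<le> Q \<Longrightarrow> luk_eval Q e \<phi> \<le> Q"
  by (induction \<phi>) auto

lemma finitary_structural_logic_luk: "finitary_structural_logic (luk Q J)"
  unfolding luk_def by (rule finitary_structural_logic_matrix_conseq) auto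

lemma lneg_of_nat:
  "0 < Q \<Longrightarrow> k \<le> Q \<Longrightarrow> lneg (of_nat k / of_nat Q) = of_nat (Q - k) / of_nat Q"
  by (simp add: lneg_def of_nat_diff field_simps)

lemma limp_of_nat:
  assumes "0 < Q" "k \<le> Q" "l \<le> Q"
  shows "limp (of_nat k / of_nat Q) (of_nat l / of_nat Q) = of_nat (min Q (Q - k + l)) / of_nat Q"
proof -
  have sum: "1 - of_nat k / of_nat Q + of_nat l / of_nat Q = (of_nat (Q - k + l) :: rat) / of_nat Q"
    using assms by (simp add: of_nat_diff field_simps)
  have "limp (of_nat k / of_nat Q) (of_nat l / of_nat Q) = min 1 ((of_nat (Q - k + l) :: rat) / of_nat Q)"
    by (simp only: limp_def sum)
  also have "\<dots> = of_nat (min Q (Q - k + l)) / of_nat Q"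
    using assms(1) by (auto simp: min_def field_simps)
  finally show ?thesis .
qed

lemma bij_betw_LV: "0 < Q \<Longrightarrow> bij_betw (\<lambda>k. of_nat k / of_nat Q :: rat) {..Q} (LV Q)"
  by (auto simp: bij_betw_def inj_on_def LV_def)

lemma of_nat_div_in_LV: "k \<le> Q \<Longrightarrow> of_nat k / of_nat Q \<in> LV Q"
  unfolding LV_def by blast

lemma LV_closed:
  assumes "0 < Q" "x \<in> LV Q" "y \<in> LV Q"
  shows "lneg x \<in> LV Q" and "limp x y \<in> LV Q"
proof -
  obtain k l where kl: "k \<le> Q" "x = of_nat k / of_nat Q" "l \<le> Q" "y = of_nat l / of_nat Q"
    using assms(2,3) unfolding LV_def by blast
  show "lneg x \<in> LV Q"
    using kl assms(1) by (metis lneg_of_nat of_nat_div_in_LV diff_le_self)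
  show "limp x y \<in> LV Q"
    using kl assms(1) by (metis limp_of_nat of_nat_div_in_LV min.cobounded1)
qed

lemma finite_LV: "finite (LV Q)"
  unfolding LV_def by (rule finite_image_set) simp

lemma LV_matrix_iso:
  assumes Q: "0 < Q" and D: "\<And>k. k \<le> Q \<Longrightarrow> of_nat k / of_nat Q \<in> D \<longleftrightarrow> J \<le> k"
  shows "matrix_conseq (LV Q) lneg limp D = luk Q J"
    and "matrix_sat (LV Q) lneg limp D = luk_sat Q J"
  using matrix_iso[OF bij_betw_LV[OF Q], where ng'="\<lambda>x. Q - x" and im'="\<lambda>x y. min Q (Q - x + y)"
      and E="{J..}"]
  unfolding luk_def luk_sat_def by (simp_all add: lneg_of_nat limp_of_nat Q D)

lemma LV_one_matrix_iso:
  "matrix_conseq (LV 1) lneg limp {1} = luk 1 1" "matrix_sat (LV 1) lneg limp {1} = luk_sat 1 1"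
  by (rule LV_matrix_iso; auto simp: le_Suc_eq)+

lemma LV_Fil_matrix_iso:
  assumes "0 < q"
  shows "matrix_conseq (LV q) lneg limp (LV q \<inter> Fil j q) = luk q j"
    and "matrix_sat (LV q) lneg limp (LV q \<inter> Fil j q) = luk_sat q j"
  by (rule LV_matrix_iso; use assms in \<open>auto simp: Fil_def LV_def divide_le_cancel\<close>)+

lemma Lq_eq_luk: "0 < q \<Longrightarrow> Lq j q = luk q j"
  unfolding Lq_def by (rule LV_Fil_matrix_iso)

lemma CPL_eq_luk: "CPL = luk 1 1"
  unfolding CPL_def by (rule LV_one_matrix_iso)

lemma luk_eval_scale: "\<forall>n. c n \<le> 1 \<Longrightarrow> luk_eval Q (\<lambda>n. Q * c n) \<phi> = Q * luk_eval 1 c \<phi>"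
proof (induction \<phi>)
  case (Neg \<phi>)
  then have "luk_eval 1 c \<phi> \<le> 1"
    by (simp add: luk_eval_le)
  with Neg show ?case
    by (auto simp: le_Suc_eq)
next
  case (Imp \<phi> \<psi>)
  then have "luk_eval 1 c \<phi> \<le> 1" "luk_eval 1 c \<psi> \<le> 1"
    by (simp_all add: luk_eval_le)
  with Imp show ?case
    by (auto simp: le_Suc_eq)
qed simp

lemma luk_designated_scale:
  assumes "0 < j" "j \<le> q" "\<forall>n. c n \<le> 1"
  shows "j \<le> luk_eval q (\<lambda>n. q * c n) \<phi> \<longleftrightarrow> 1 \<le> luk_eval 1 c \<phi>"
proof -
  have "luk_eval 1 c \<phi> \<le> 1"
    using assms(3) by (rule luk_eval_le)
  then show ?thesis
    using assms by (auto simp: luk_eval_scale le_Suc_eq)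
qed

lemma luk_weaker_eq_cpl:
  assumes "0 < j" "j \<le> q"
  shows "weaker_eq (luk q j) (luk 1 1)"
  unfolding weaker_eq_def luk_iff
proof (intro allI impI)
  fix \<Gamma> \<phi> c
  assume cons: "\<forall>e. (\<forall>n. e n \<le> q) \<longrightarrow> (\<forall>\<psi>\<in>\<Gamma>. j \<le> luk_eval q e \<psi>) \<longrightarrow> j \<le> luk_eval q e \<phi>"
    and c: "\<forall>n. c n \<le> 1" and prems: "\<forall>\<psi>\<in>\<Gamma>. 1 \<le> luk_eval 1 c \<psi>"
  have "\<forall>n. q * c n \<le> q"
    using c by simp
  moreover have "\<forall>\<psi>\<in>\<Gamma>. j \<le> luk_eval q (\<lambda>n. q * c n) \<psi>"
    using prems luk_designated_scale[OF assms c] by blast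
  ultimately have "j \<le> luk_eval q (\<lambda>n. q * c n) \<phi>"
    using cons[THEN spec[of _ "\<lambda>n. q * c n"]] by blast
  then show "1 \<le> luk_eval 1 c \<phi>"
    using luk_designated_scale[OF assms c] by blast
qed

lemma luk_sat_if_cpl_sat:
  assumes "0 < j" "j \<le> q" "luk_sat 1 1 \<Gamma>"
  shows "luk_sat q j \<Gamma>"
proof -
  obtain c where c: "\<forall>n. c n \<le> 1" and prems: "\<forall>\<psi>\<in>\<Gamma>. 1 \<le> luk_eval 1 c \<psi>"
    using assms(3) unfolding luk_sat_iff by blast
  have "\<forall>n. q * c n \<le> q"
    using c by simp
  moreover have "\<forall>\<psi>\<in>\<Gamma>. j \<le> luk_eval q (\<lambda>n. q * c n) \<psi>"
    using prems luk_designated_scale[OF assms(1,2) c] by blast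
  ultimately show ?thesis
    unfolding luk_sat_iff by (intro exI[of _ "\<lambda>n. q * c n"] conjI)
qed

lemma luk_if_not_luk_sat: "\<not> luk_sat Q J \<Gamma> \<Longrightarrow> luk Q J \<Gamma> \<phi>"
  unfolding luk_sat_iff luk_iff by blast

lemma Lqbar_iff:
  assumes "0 < j" "j \<le> q"
  shows "Lqbar j q \<Gamma> \<phi> \<longleftrightarrow> luk q j \<Gamma> \<phi> \<or> \<not> luk_sat 1 1 \<Gamma>"
proof -
  have q: "0 < q"
    using assms by simp
  have "Lqbar j q \<Gamma> \<phi> \<longleftrightarrow> (luk q j \<Gamma> \<phi> \<or> \<not> luk_sat 1 1 \<Gamma>) \<and> (luk 1 1 \<Gamma> \<phi> \<or> \<not> luk_sat q j \<Gamma>)"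
    unfolding Lqbar_def matrix_conseq_prod LV_Fil_matrix_iso[OF q] LV_one_matrix_iso ..
  then show ?thesis
    using luk_weaker_eq_cpl[OF assms, unfolded weaker_eq_def, rule_format, of \<Gamma> \<phi>]
      luk_sat_if_cpl_sat[OF assms, of \<Gamma>] luk_if_not_luk_sat[of 1 1 \<Gamma> \<phi>] by blast
qed

lemma finitary_structural_logic_Lqbar:
  assumes "0 < q"
  shows "finitary_structural_logic (Lqbar j q)"
  unfolding Lqbar_def
  by (rule finitary_structural_logic_matrix_conseq) (use assms in \<open>auto simp: LV_closed finite_LV\<close>)

lemma luk_weaker_eq_Lqbar:
  assumes "0 < j" "j \<le> q"
  shows "weaker_eq (luk q j) (Lqbar j q)"
  unfolding weaker_eq_def using Lqbar_iff[OF assms] by blast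

lemma Lqbar_weaker_eq_cpl:
  assumes "0 < j" "j \<le> q"
  shows "weaker_eq (Lqbar j q) (luk 1 1)"
  using Lqbar_iff[OF assms] luk_weaker_eq_cpl[OF assms] luk_if_not_luk_sat
  unfolding weaker_eq_def by blast

section \<open>Term-definable functions of \<open>{0..Q}\<close>\<close>

definition definable :: "nat \<Rightarrow> ((nat \<Rightarrow> nat) \<Rightarrow> nat) \<Rightarrow> bool" where
  "definable Q F \<longleftrightarrow> (\<exists>\<phi>. \<forall>e. (\<forall>n. e n \<le> Q) \<longrightarrow> luk_eval Q e \<phi> = F e)"

definition unary_definable :: "nat \<Rightarrow> (nat \<Rightarrow> nat) \<Rightarrow> bool" where
  "unary_definable Q g \<longleftrightarrow> definable Q (\<lambda>e. g (e 0))"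

lemma definable_Var: "definable Q (\<lambda>e. e i)"
  unfolding definable_def by (rule exI[of _ "Var i"]) simp

lemma definable_neg: "definable Q F \<Longrightarrow> definable Q (\<lambda>e. Q - F e)"
  unfolding definable_def by (metis eval.simps(2))

lemma definable_imp:
  assumes "definable Q F" "definable Q G"
  shows "definable Q (\<lambda>e. min Q (Q - F e + G e))"
proof -
  obtain \<phi> \<psi> where "\<forall>e. (\<forall>n. e n \<le> Q) \<longrightarrow> luk_eval Q e \<phi> = F e"
    and "\<forall>e. (\<forall>n. e n \<le> Q) \<longrightarrow> luk_eval Q e \<psi> = G e"
    using assms unfolding definable_def by blast
  then show ?thesis
    unfolding definable_def by (intro exI[of _ "Imp \<phi> \<psi>"]) simp
qed

lemma definable_le: "definable Q F \<Longrightarrow> \<forall>n. e n \<le> Q \<Longrightarrow> F e \<le> Q"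
  unfolding definable_def by (metis luk_eval_le)

lemma definable_cong: "definable Q F \<Longrightarrow> (\<And>e. \<forall>n. e n \<le> Q \<Longrightarrow> F e = G e) \<Longrightarrow> definable Q G"
  unfolding definable_def by metis

lemma definable_top: "definable Q (\<lambda>e. Q)"
  by (rule definable_cong[OF definable_imp[OF definable_Var definable_Var, of Q 0 0]]) simp

lemma definable_bot: "definable Q (\<lambda>e. 0)"
  using definable_neg[OF definable_top, of Q] by simp

lemma definable_max:
  assumes "definable Q F" "definable Q G"
  shows "definable Q (\<lambda>e. max (F e) (G e))"
proof (rule definable_cong[OF definable_imp[OF definable_imp[OF assms] assms(2)]])
  fix e :: "nat \<Rightarrow> nat"
  assume "\<forall>n. e n \<le> Q"
  then have "F e \<le> Q" "G e \<le> Q"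
    using definable_le assms by blast+
  then show "min Q (Q - min Q (Q - F e + G e) + G e) = max (F e) (G e)"
    by auto
qed

lemma definable_min:
  assumes "definable Q F" "definable Q G"
  shows "definable Q (\<lambda>e. min (F e) (G e))"
proof (rule definable_cong[OF definable_neg[OF definable_max[OF definable_neg[OF assms(1)] definable_neg[OF assms(2)]]]])
  fix e :: "nat \<Rightarrow> nat"
  assume "\<forall>n. e n \<le> Q"
  then have "F e \<le> Q" "G e \<le> Q"
    using definable_le assms by blast+
  then show "Q - max (Q - F e) (Q - G e) = min (F e) (G e)"
    by auto
qed

lemma definable_bounded_add:
  assumes "definable Q F" "definable Q G"
  shows "definable Q (\<lambda>e. min Q (F e + G e))"
proof (rule definable_cong[OF definable_imp[OF definable_neg[OF assms(1)] assms(2)]])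
  fix e :: "nat \<Rightarrow> nat"
  assume "\<forall>n. e n \<le> Q"
  then have "F e \<le> Q"
    using definable_le assms by blast
  then show "min Q (Q - (Q - F e) + G e) = min Q (F e + G e)"
    by auto
qed

lemma definable_bounded_diff:
  assumes "definable Q F" "definable Q G"
  shows "definable Q (\<lambda>e. F e - G e)"
proof (rule definable_cong[OF definable_neg[OF definable_imp[OF assms]]])
  fix e :: "nat \<Rightarrow> nat"
  assume "\<forall>n. e n \<le> Q"
  then have "F e \<le> Q" "G e \<le> Q"
    using definable_le assms by blast+
  then show "Q - min Q (Q - F e + G e) = F e - G e"
    by auto
qed

lemma definable_bounded_mult: "definable Q F \<Longrightarrow> definable Q (\<lambda>e. min Q (k * F e))"
proof (induction k)
  case 0
  show ?case
    using definable_bot by simp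
next
  case (Suc k)
  show ?case
    by (rule definable_cong[OF definable_bounded_add[OF Suc.IH[OF Suc.prems] Suc.prems]]) auto
qed

lemma definable_Max:
  assumes "finite I" "I \<noteq> {}" "\<And>i. i \<in> I \<Longrightarrow> definable Q (F i)"
  shows "definable Q (\<lambda>e. Max ((\<lambda>i. F i e) ` I))"
  using assms
proof (induction I rule: finite_ne_induct)
  case (insert i I)
  have "definable Q (\<lambda>e. max (F i e) (Max ((\<lambda>i. F i e) ` I)))"
    using insert by (intro definable_max) auto
  then show ?case
    using insert by simp
qed simp

lemma definable_Min:
  assumes "finite I" "I \<noteq> {}" "\<And>i. i \<in> I \<Longrightarrow> definable Q (F i)"
  shows "definable Q (\<lambda>e. Min ((\<lambda>i. F i e) ` I))"
  using assms
proof (induction I rule: finite_ne_induct)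
  case (insert i I)
  have "definable Q (\<lambda>e. min (F i e) (Min ((\<lambda>i. F i e) ` I)))"
    using insert by (intro definable_min) auto
  then show ?case
    using insert by simp
qed simp

lemma definable_comp:
  assumes g: "unary_definable Q g" and F: "definable Q F"
  shows "definable Q (\<lambda>e. g (F e))"
proof -
  obtain \<phi> where \<phi>: "\<forall>e. (\<forall>n. e n \<le> Q) \<longrightarrow> luk_eval Q e \<phi> = g (e 0)"
    using g unfolding unary_definable_def definable_def by blast
  obtain \<psi> where \<psi>: "\<forall>e. (\<forall>n. e n \<le> Q) \<longrightarrow> luk_eval Q e \<psi> = F e"
    using F unfolding definable_def by blast
  have "luk_eval Q e (subst (\<lambda>_. \<psi>) \<phi>) = g (F e)" if e: "\<forall>n. e n \<le> Q" for e
  proof -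
    have "\<forall>n. luk_eval Q e \<psi> \<le> Q"
      using luk_eval_le[OF e] by blast
    then show ?thesis
      using \<phi> \<psi> e by (simp add: eval_subst)
  qed
  then show ?thesis
    unfolding definable_def by blast
qed

lemma unary_definable_comp:
  "unary_definable Q g \<Longrightarrow> unary_definable Q h \<Longrightarrow> unary_definable Q (\<lambda>x. g (h x))"
  using definable_comp[of Q g "\<lambda>e. h (e 0)"] unfolding unary_definable_def by blast

lemma unary_definable_at: "unary_definable Q g \<Longrightarrow> definable Q (\<lambda>e. g (e i))"
  by (rule definable_comp[OF _ definable_Var])

lemma unary_definable_id: "unary_definable Q (\<lambda>x. x)"
  unfolding unary_definable_def by (rule definable_Var)

lemma unary_definable_neg: "unary_definable Q (\<lambda>x. Q - x)"
  unfolding unary_definable_def by (rule definable_neg[OF definable_Var])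

lemma unary_definable_double: "unary_definable Q (\<lambda>x. min Q (x + x))"
  unfolding unary_definable_def by (rule definable_bounded_add[OF definable_Var definable_Var])

lemma unary_definable_halve: "unary_definable Q (\<lambda>x. x + x - Q)"
proof -
  have "definable Q (\<lambda>e. e 0 + e 0 - Q)"
    by (rule definable_cong[OF definable_neg[OF definable_imp[OF definable_Var definable_neg[OF definable_Var]], of Q 0 0]])
      (auto dest: spec[of _ 0])
  then show ?thesis
    unfolding unary_definable_def .
qed

lemma unary_definable_le: "unary_definable Q g \<Longrightarrow> x \<le> Q \<Longrightarrow> g x \<le> Q"
  unfolding unary_definable_def using definable_le[of Q "\<lambda>e. g (e 0)" "\<lambda>_. x"] by simp

text \<open>Doubling \<open>min Q (2x)\<close> and halving \<open>2x - Q\<close> both double the gap \<open>a - b\<close> unless they already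
  separate \<open>a\<close> from \<open>b\<close>.\<close>

lemma unary_definable_separates_lt:
  "b < a \<Longrightarrow> a \<le> Q \<Longrightarrow> \<exists>g. unary_definable Q g \<and> g a = Q \<and> g b < Q"
proof (induction "Q - (a - b)" arbitrary: a b rule: less_induct)
  case less
  consider "a = Q" | "a \<noteq> Q" "a + a \<le> Q" | "a + a > Q" "b + b < Q" | "a \<noteq> Q" "b + b \<ge> Q"
    by linarith
  then show ?case
  proof cases
    case 1
    then show ?thesis
      using unary_definable_id less.prems by auto
  next
    case 2
    have "Q - (a + a - (b + b)) < Q - (a - b)" "b + b < a + a"
      using 2 less.prems by auto
    then obtain g where g: "unary_definable Q g" "g (a + a) = Q" "g (b + b) < Q"
      using less.hyps[of "a + a" "b + b"] 2 by blast
    have "min Q (a + a) = a + a" "min Q (b + b) = b + b"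
      using 2 less.prems by auto
    then have "g (min Q (a + a)) = Q" "g (min Q (b + b)) < Q"
      using g by simp_all
    then show ?thesis
      using unary_definable_comp[OF g(1) unary_definable_double] by blast
  next
    case 3
    then show ?thesis
      using unary_definable_double by (intro exI[of _ "\<lambda>x. min Q (x + x)"]) auto
  next
    case 4
    have "Q - ((a + a - Q) - (b + b - Q)) < Q - (a - b)" "b + b - Q < a + a - Q" "a + a - Q \<le> Q"
      using 4 less.prems by auto
    then obtain g where g: "unary_definable Q g" "g (a + a - Q) = Q" "g (b + b - Q) < Q"
      using less.hyps[of "a + a - Q" "b + b - Q"] by blast
    then show ?thesis
      using unary_definable_comp[OF g(1) unary_definable_halve]
      by (intro exI[of _ "\<lambda>x. g (x + x - Q)"]) auto
  qed
qed

lemma unary_definable_separates_gt: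
  assumes "b < a" "a \<le> Q"
  shows "\<exists>g. unary_definable Q g \<and> g a = Q \<and> g b = 0"
proof -
  obtain g where g: "unary_definable Q g" "g a = Q" "g b < Q"
    using unary_definable_separates_lt[OF assms] by blast
  have "unary_definable Q (\<lambda>x. Q - min Q (Q * (Q - g x)))"
    using g(1) unfolding unary_definable_def by (intro definable_neg definable_bounded_mult)
  moreover have "Q \<le> Q * (Q - g b)"
    using g(3) by simp
  ultimately show ?thesis
    using g(2) by (intro exI[of _ "\<lambda>x. Q - min Q (Q * (Q - g x))"]) auto
qed

lemma unary_definable_separates:
  assumes "a \<noteq> b" "a \<le> Q" "b \<le> Q"
  shows "\<exists>g. unary_definable Q g \<and> g a = Q \<and> g b = 0"
proof (cases "b < a")
  case True
  then show ?thesis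
    using unary_definable_separates_gt assms by blast
next
  case False
  then have "Q - b < Q - a" "Q - a \<le> Q"
    using assms by auto
  then obtain g where g: "unary_definable Q g" "g (Q - a) = Q" "g (Q - b) = 0"
    using unary_definable_separates_gt by blast
  then show ?thesis
    using unary_definable_comp[OF g(1) unary_definable_neg] by blast
qed

lemma unary_definable_indicator:
  assumes Q: "0 < Q" and a: "a \<le> Q"
  shows "\<exists>g. unary_definable Q g \<and> g a = Q \<and> (\<forall>x\<le>Q. x \<noteq> a \<longrightarrow> g x = 0)"
proof -
  let ?I = "{x. x \<le> Q \<and> x \<noteq> a}"
  have ne: "?I \<noteq> {}"
    using Q by (cases "a = 0") auto
  have "\<forall>x\<in>?I. \<exists>g. unary_definable Q g \<and> g a = Q \<and> g x = 0"
    using unary_definable_separates a by auto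
  then obtain f where f: "\<And>x. x \<in> ?I \<Longrightarrow> unary_definable Q (f x) \<and> f x a = Q \<and> f x x = 0"
    by metis
  let ?g = "\<lambda>y. Min ((\<lambda>x. f x y) ` ?I)"
  have "unary_definable Q ?g"
    unfolding unary_definable_def
    by (rule definable_Min[OF _ ne]) (use f in \<open>auto simp: unary_definable_def\<close>)
  moreover have "?g a = Q"
  proof -
    have "(\<lambda>x. f x a) ` ?I = {Q}"
      using f ne by auto
    then show ?thesis
      by simp
  qed
  moreover have "?g x = 0" if "x \<le> Q" "x \<noteq> a" for x
  proof -
    have "?g x \<le> f x x"
      using that by (intro Min_le) auto
    then show ?thesis
      using f that by simp
  qed
  ultimately show ?thesis
    by blast
qed

lemma least_positive_dvd:
  fixes S :: "nat set"
  assumes diff: "\<And>s t. s \<in> S \<Longrightarrow> t \<in> S \<Longrightarrow> t - s \<in> S"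
    and s0: "s0 \<in> S" "0 < s0" and least: "\<And>s. s \<in> S \<Longrightarrow> 0 < s \<Longrightarrow> s0 \<le> s"
    and t: "t \<in> S"
  shows "s0 dvd t"
proof -
  have "t mod s0 \<in> S"
    using t
  proof (induction t rule: less_induct)
    case (less t)
    show ?case
    proof (cases "t < s0")
      case True
      then show ?thesis
        using less.prems by simp
    next
      case False
      then have "t - s0 \<in> S" "t - s0 < t"
        using diff[OF s0(1) less.prems] s0(2) by auto
      then have "(t - s0) mod s0 \<in> S"
        using less.IH by blast
      then show ?thesis
        using False by (simp add: le_mod_geq)
    qed
  qed
  moreover have "t mod s0 < s0"
    using s0(2) by simp
  ultimately show ?thesis
    using least by (metis leD mod_eq_0_iff_dvd not_gr0)
qed

text \<open>The values at \<open>b\<close> of unary definable functions are closed under truncated subtraction and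
  contain \<open>Q\<close>, so their least positive element divides \<open>Q\<close>; it is at most \<open>b < Q\<close>, hence \<open>1\<close>.\<close>

lemma unary_definable_value_one:
  assumes p: "prime Q" and b: "0 < b" "b < Q"
  shows "\<exists>g. unary_definable Q g \<and> g b = 1"
proof -
  let ?S = "{t. \<exists>g. unary_definable Q g \<and> g b = t}"
  let ?P = "{s\<in>?S. 0 < s}"
  have "?P \<subseteq> {..Q}"
    using unary_definable_le b by fastforce
  then have finP: "finite ?P"
    using finite_subset by blast
  have bP: "b \<in> ?P"
    using unary_definable_id b by auto
  define s0 where "s0 = Min ?P"
  have s0P: "s0 \<in> ?P"
    unfolding s0_def using finP bP by (intro Min_in) auto
  have s0_least: "s0 \<le> s" if "s \<in> ?S" "0 < s" for s
    unfolding s0_def using finP that by (intro Min_le) auto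
  have diff: "t - s \<in> ?S" if s: "s \<in> ?S" and t: "t \<in> ?S" for s t
  proof -
    obtain g where g: "unary_definable Q g" "g b = s"
      using s by blast
    obtain h where h: "unary_definable Q h" "h b = t"
      using t by blast
    have "unary_definable Q (\<lambda>x. h x - g x)"
      using h(1) g(1) unfolding unary_definable_def by (rule definable_bounded_diff)
    then show ?thesis
      using g(2) h(2) by auto
  qed
  have "unary_definable Q (\<lambda>_. Q)"
    unfolding unary_definable_def by (rule definable_top)
  then have "s0 dvd Q"
    using least_positive_dvd[OF diff _ _ s0_least] s0P by blast
  then have "s0 = 1 \<or> s0 = Q"
    using p by (simp add: prime_nat_iff)
  moreover have "s0 \<le> b"
    using s0_least bP by blast
  ultimately show ?thesis
    using s0P b by auto
qed

lemma unary_definable_value: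
  assumes "prime Q" "0 < b" "b < Q" "m \<le> Q"
  shows "\<exists>g. unary_definable Q g \<and> g b = m"
proof -
  obtain g where g: "unary_definable Q g" "g b = 1"
    using unary_definable_value_one assms by blast
  have "unary_definable Q (\<lambda>x. min Q (m * g x))"
    using g(1) unfolding unary_definable_def by (rule definable_bounded_mult)
  then show ?thesis
    using g assms(4) by (intro exI[of _ "\<lambda>x. min Q (m * g x)"]) auto
qed

lemma unary_definable_interpolate:
  assumes Q: "0 < Q" and I: "finite I" "I \<noteq> {}" "I \<subseteq> {..Q}" and f: "\<And>b. b \<in> I \<Longrightarrow> f b \<le> Q"
    and pointwise: "\<And>b. b \<in> I \<Longrightarrow> \<exists>g. unary_definable Q g \<and> g b = f b"
  shows "\<exists>g. unary_definable Q g \<and> (\<forall>x\<in>I. g x = f x)"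
proof -
  have "\<forall>b\<in>I. \<exists>g. unary_definable Q g \<and> g b = Q \<and> (\<forall>x\<le>Q. x \<noteq> b \<longrightarrow> g x = 0)"
    using unary_definable_indicator Q I(3) by auto
  then obtain d where d: "\<And>b. b \<in> I \<Longrightarrow>
      unary_definable Q (d b) \<and> d b b = Q \<and> (\<forall>x\<le>Q. x \<noteq> b \<longrightarrow> d b x = 0)"
    by metis
  obtain w where w: "\<And>b. b \<in> I \<Longrightarrow> unary_definable Q (w b) \<and> w b b = f b"
    using pointwise by metis
  let ?g = "\<lambda>x. Max ((\<lambda>b. min (d b x) (w b x)) ` I)"
  have "definable Q (\<lambda>e. min (d b (e 0)) (w b (e 0)))" if "b \<in> I" for b
    using d[OF that] w[OF that] unfolding unary_definable_def by (intro definable_min) simp_all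
  then have "unary_definable Q ?g"
    unfolding unary_definable_def
    using definable_Max[where I=I and F="\<lambda>b e. min (d b (e 0)) (w b (e 0))" and Q=Q] I by simp
  moreover have "?g x = f x" if x: "x \<in> I" for x
  proof (rule Max_eqI)
    fix z
    assume "z \<in> (\<lambda>b. min (d b x) (w b x)) ` I"
    then obtain b where b: "b \<in> I" "z = min (d b x) (w b x)"
      by blast
    show "z \<le> f x"
    proof (cases "b = x")
      case True
      then show ?thesis
        using b w[OF b(1)] by simp
    next
      case False
      then have "d b x = 0"
        using d[OF b(1)] x I(3) by auto
      then show ?thesis
        using b by simp
    qed
  next
    have "f x = min (d x x) (w x x)"
      using d[OF x] w[OF x] f[OF x] by simp
    then show "f x \<in> (\<lambda>b. min (d b x) (w b x)) ` I"
      using x by (rule image_eqI)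
  qed (use I in simp)
  ultimately show ?thesis
    by blast
qed

lemma unary_definable_const_nonclassical:
  assumes p: "prime Q" and m: "m \<le> Q"
  shows "\<exists>g. unary_definable Q g \<and> (\<forall>x. 0 < x \<and> x < Q \<longrightarrow> g x = m)"
proof -
  have "2 \<le> Q"
    using p prime_ge_2_nat by blast
  then have "\<exists>g. unary_definable Q g \<and> (\<forall>x\<in>{1..<Q}. g x = m)"
    using m unary_definable_value[OF p _ _ m]
    by (intro unary_definable_interpolate[where f="\<lambda>_. m"]) auto
  then show ?thesis
    by (metis One_nat_def Suc_leI atLeastLessThan_iff)
qed

definition classical_indicator :: "nat \<Rightarrow> nat \<Rightarrow> nat" where
  "classical_indicator Q x = Q - min Q (Q * (Q - max x (Q - x)))"

lemma unary_definable_classical_indicator: "unary_definable Q (classical_indicator Q)"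
  unfolding unary_definable_def classical_indicator_def
  by (intro definable_neg definable_bounded_mult definable_max definable_Var)

lemma classical_indicator_eq:
  assumes "x \<le> Q"
  shows "classical_indicator Q x = (if x = 0 \<or> x = Q then Q else 0)"
proof (cases "x = 0 \<or> x = Q")
  case False
  then have "1 \<le> Q - max x (Q - x)"
    using assms by auto
  then have "Q \<le> Q * (Q - max x (Q - x))"
    by simp
  then show ?thesis
    using False by (simp add: classical_indicator_def)
qed (auto simp: classical_indicator_def)

definition classical_on :: "nat \<Rightarrow> nat set \<Rightarrow> (nat \<Rightarrow> nat) \<Rightarrow> bool" where
  "classical_on Q W e \<longleftrightarrow> (\<forall>i\<in>W. e i = 0 \<or> e i = Q)"

lemma definable_classical_test:
  assumes W: "finite W"
  shows "definable q (\<lambda>e. if classical_on q W e then q else 0)"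
proof (cases "W = {}")
  case True
  then show ?thesis
    using definable_top by (simp add: classical_on_def)
next
  case W_ne: False
  have "definable q (\<lambda>e. Min ((\<lambda>i. classical_indicator q (e i)) ` W))"
    by (rule definable_Min[OF W W_ne unary_definable_at[OF unary_definable_classical_indicator]])
  then show ?thesis
  proof (rule definable_cong)
    fix e :: "nat \<Rightarrow> nat"
    assume "\<forall>n. e n \<le> q"
    then have ind: "classical_indicator q (e i) = (if e i = 0 \<or> e i = q then q else 0)" for i
      by (simp add: classical_indicator_eq)
    show "Min ((\<lambda>i. classical_indicator q (e i)) ` W) = (if classical_on q W e then q else 0)"
    proof (cases "classical_on q W e")
      case True
      then have "(\<lambda>i. classical_indicator q (e i)) ` W = {q}"
        using W_ne ind unfolding classical_on_def by auto
      then show ?thesis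
        using True by simp
    next
      case False
      then obtain i0 where i0: "i0 \<in> W" "e i0 \<noteq> 0" "e i0 \<noteq> q"
        unfolding classical_on_def by blast
      then have "Min ((\<lambda>i. classical_indicator q (e i)) ` W) \<le> classical_indicator q (e i0)"
        using W by (intro Min_le) auto
      then show ?thesis
        using ind[of i0] i0 False by simp
    qed
  qed
qed

lemma definable_nonclassical_value:
  assumes p: "prime q" and W: "finite W" and m: "m \<le> q"
  shows "definable q (\<lambda>e. if classical_on q W e then 0 else m)"
proof (cases "W = {}")
  case True
  then show ?thesis
    using definable_bot by (simp add: classical_on_def)
next
  case W_ne: False
  obtain g where g: "unary_definable q g" "\<forall>x. 0 < x \<and> x < q \<longrightarrow> g x = m"
    using unary_definable_const_nonclassical[OF p m] by blast
  let ?h = "\<lambda>x. min (q - classical_indicator q x) (g x)"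
  have "unary_definable q ?h"
    using unary_definable_classical_indicator g(1) unfolding unary_definable_def
    by (intro definable_min definable_neg)
  then have "definable q (\<lambda>e. Max ((\<lambda>i. ?h (e i)) ` W))"
    by (rule definable_Max[OF W W_ne unary_definable_at])
  then show ?thesis
  proof (rule definable_cong)
    fix e :: "nat \<Rightarrow> nat"
    assume e: "\<forall>n. e n \<le> q"
    have h: "?h (e i) = (if e i = 0 \<or> e i = q then 0 else m)" for i
      using e[rule_format, of i] g(2) m by (auto simp: classical_indicator_eq)
    show "Max ((\<lambda>i. ?h (e i)) ` W) = (if classical_on q W e then 0 else m)"
    proof (cases "classical_on q W e")
      case True
      then have "(\<lambda>i. ?h (e i)) ` W = {0}"
        using W_ne h unfolding classical_on_def by auto
      then show ?thesis
        using True by simp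
    next
      case False
      then obtain i0 where i0: "i0 \<in> W" "e i0 \<noteq> 0" "e i0 \<noteq> q"
        unfolding classical_on_def by blast
      have "Max ((\<lambda>i. ?h (e i)) ` W) = m"
      proof (rule Max_eqI)
        show "z \<le> m" if "z \<in> (\<lambda>i. ?h (e i)) ` W" for z
          using that h by auto
        have "m = ?h (e i0)"
          using h i0 by simp
        then show "m \<in> (\<lambda>i. ?h (e i)) ` W"
          using i0(1) by (rule image_eqI)
      qed (use W in simp)
      then show ?thesis
        using False by simp
    qed
  qed
qed

lemma definable_classical_switch:
  assumes p: "prime q" and W: "finite W" and m: "m \<le> q" and K: "K = 0 \<or> K = q"
  shows "definable q (\<lambda>e. if classical_on q W e then K else m)"
proof -
  have "definable q (\<lambda>e. K)"
    using K definable_bot definable_top by auto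
  then have "definable q (\<lambda>e. max (min (if classical_on q W e then q else 0) K)
                                  (if classical_on q W e then 0 else m))"
    by (intro definable_max definable_min definable_classical_test[OF W]
        definable_nonclassical_value[OF p W m])
  then show ?thesis
    by (rule definable_cong) (use K in auto)
qed

lemma switch_substitution:
  assumes "prime q" "finite W" "\<forall>n. e1 n \<le> q" "\<forall>n. c n = 0 \<or> c n = q"
  obtains \<sigma> where "\<And>e \<phi>. \<forall>n. e n \<le> q \<Longrightarrow>
    luk_eval q e (subst \<sigma> \<phi>) = luk_eval q (if classical_on q W e then c else e1) \<phi>"
proof -
  have "\<forall>n. \<exists>\<chi>. \<forall>e. (\<forall>n. e n \<le> q) \<longrightarrow> luk_eval q e \<chi> = (if classical_on q W e then c n else e1 n)"
    using definable_classical_switch[OF assms(1,2)] assms(3,4) unfolding definable_def by metis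
  then obtain \<sigma> where \<sigma>: "\<And>n e. \<forall>n. e n \<le> q \<Longrightarrow>
      luk_eval q e (\<sigma> n) = (if classical_on q W e then c n else e1 n)"
    by metis
  show ?thesis
  proof (rule that)
    fix e :: "nat \<Rightarrow> nat" and \<phi>
    assume "\<forall>n. e n \<le> q"
    then have "(\<lambda>n. luk_eval q e (\<sigma> n)) = (if classical_on q W e then c else e1)"
      using \<sigma> by auto
    then show "luk_eval q e (subst \<sigma> \<phi>) = luk_eval q (if classical_on q W e then c else e1) \<phi>"
      by (simp add: eval_subst)
  qed
qed

lemma luk_designated_classical:
  assumes "0 < j" "j \<le> q" "classical_on q W e" "vars \<phi> \<subseteq> W"
  shows "j \<le> luk_eval q e \<phi> \<longleftrightarrow> 1 \<le> luk_eval 1 (\<lambda>n. if e n = q then 1 else 0) \<phi>"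
proof -
  have "luk_eval q e \<phi> = luk_eval q (\<lambda>n. q * (if e n = q then 1 else 0)) \<phi>"
    by (rule eval_cong) (use assms in \<open>auto simp: classical_on_def\<close>)
  then show ?thesis
    using luk_designated_scale[OF assms(1,2), of "\<lambda>n. if e n = q then 1 else 0" \<phi>] by simp
qed

section \<open>Logics between \<open>L\<^sup>j\<^sub>q\<close> and \<open>CPL\<close>\<close>

lemma consequence_relationD:
  assumes "consequence_relation L"
  shows consequence_relation_refl: "\<phi> \<in> \<Gamma> \<Longrightarrow> L \<Gamma> \<phi>"
    and consequence_relation_mono: "L \<Gamma> \<phi> \<Longrightarrow> \<Gamma> \<subseteq> \<Delta> \<Longrightarrow> L \<Delta> \<phi>"
    and consequence_relation_cut: "\<forall>\<psi>\<in>\<Delta>. L \<Gamma> \<psi> \<Longrightarrow> L \<Delta> \<phi> \<Longrightarrow> L \<Gamma> \<phi>"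
  using assms unfolding consequence_relation_def by (meson, meson, meson)

lemma weaker_eq_antisym: "weaker_eq L1 L2 \<Longrightarrow> weaker_eq L2 L1 \<Longrightarrow> L1 = L2"
  unfolding weaker_eq_def by (intro ext) blast

lemma weaker_eq_if_finite:
  assumes cr: "consequence_relation L" and fin: "finitary M"
    and finite_rules: "\<And>\<Delta> \<psi>. finite \<Delta> \<Longrightarrow> M \<Delta> \<psi> \<Longrightarrow> L \<Delta> \<psi>"
  shows "weaker_eq M L"
  unfolding weaker_eq_def
proof (intro allI impI)
  fix \<Delta> \<psi>
  assume "M \<Delta> \<psi>"
  then obtain \<Delta>0 where "\<Delta>0 \<subseteq> \<Delta>" "finite \<Delta>0" "M \<Delta>0 \<psi>"
    using fin unfolding finitary_def by blast
  then show "L \<Delta> \<psi>"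
    using consequence_relation_mono[OF cr finite_rules] by blast
qed

lemma derivable_by_rule_instance:
  assumes cr: "consequence_relation L" and st: "structural L" and ext: "weaker_eq M L"
    and rule: "L \<Gamma> \<phi>" and instances: "\<forall>\<gamma>\<in>\<Gamma>. M \<Delta> (subst \<sigma> \<gamma>)"
    and instance_conclusion: "M (insert (subst \<sigma> \<phi>) \<Delta>) \<psi>"
  shows "L \<Delta> \<psi>"
proof -
  have "L (subst \<sigma> ` \<Gamma>) (subst \<sigma> \<phi>)"
    using st rule unfolding structural_def by blast
  moreover have "\<forall>\<gamma>\<in>subst \<sigma> ` \<Gamma>. L \<Delta> \<gamma>"
    using instances ext unfolding weaker_eq_def by blast
  ultimately have "L \<Delta> (subst \<sigma> \<phi>)"
    by (rule consequence_relation_cut[OF cr, rotated])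
  then have "\<forall>\<chi>\<in>insert (subst \<sigma> \<phi>) \<Delta>. L \<Delta> \<chi>"
    using consequence_relation_refl[OF cr] by blast
  moreover have "L (insert (subst \<sigma> \<phi>) \<Delta>) \<psi>"
    using instance_conclusion ext unfolding weaker_eq_def by blast
  ultimately show ?thesis
    by (rule consequence_relation_cut[OF cr])
qed

text \<open>The substitution \<open>\<sigma>\<close> of \<open>switch_substitution\<close> behaves like the countermodel \<open>e1\<close> of the
  rule \<open>\<Gamma>/\<phi>\<close> off the valuations classical on \<open>W\<close> and like the classical valuation \<open>c\<close> on them,
  so the instance \<open>\<sigma>\<Gamma>/\<sigma>\<phi>\<close> reduces \<open>\<Delta>/\<psi>\<close> to its validity at the classical valuations.\<close>

lemma derivable_in_extension:
  assumes q: "prime q"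
    and L: "consequence_relation L" "structural L" "weaker_eq (luk q j) L" "L \<Gamma> \<phi>"
    and e1: "\<forall>n. e1 n \<le> q" "\<forall>\<gamma>\<in>\<Gamma>. j \<le> luk_eval q e1 \<gamma>" "luk_eval q e1 \<phi> < j"
    and c: "\<forall>n. c n = 0 \<or> c n = q"
    and W: "finite W"
    and classical: "\<And>e. \<forall>n. e n \<le> q \<Longrightarrow> classical_on q W e \<Longrightarrow> \<forall>\<delta>\<in>\<Delta>. j \<le> luk_eval q e \<delta> \<Longrightarrow>
      (\<forall>\<gamma>\<in>\<Gamma>. j \<le> luk_eval q c \<gamma>) \<and> j \<le> luk_eval q e \<psi>"
  shows "L \<Delta> \<psi>"
proof -
  obtain \<sigma> where \<sigma>: "\<And>e \<chi>. \<forall>n. e n \<le> q \<Longrightarrow>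
      luk_eval q e (subst \<sigma> \<chi>) = luk_eval q (if classical_on q W e then c else e1) \<chi>"
    using switch_substitution[OF q W e1(1) c] by blast
  show ?thesis
  proof (rule derivable_by_rule_instance[OF L])
    show "\<forall>\<gamma>\<in>\<Gamma>. luk q j \<Delta> (subst \<sigma> \<gamma>)"
      unfolding luk_iff
    proof (intro ballI allI impI)
      fix \<gamma> e
      assume \<gamma>: "\<gamma> \<in> \<Gamma>" and e: "\<forall>n. e n \<le> q" and prems: "\<forall>\<delta>\<in>\<Delta>. j \<le> luk_eval q e \<delta>"
      show "j \<le> luk_eval q e (subst \<sigma> \<gamma>)"
      proof (cases "classical_on q W e")
        case True
        then show ?thesis
          using \<sigma>[OF e] classical[OF e True prems] \<gamma> by simp
      next
        case False
        then show ?thesis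
          using \<sigma>[OF e] e1(2) \<gamma> by simp
      qed
    qed
    show "luk q j (insert (subst \<sigma> \<phi>) \<Delta>) \<psi>"
      unfolding luk_iff
    proof (intro allI impI)
      fix e
      assume e: "\<forall>n. e n \<le> q" and prems: "\<forall>\<chi>\<in>insert (subst \<sigma> \<phi>) \<Delta>. j \<le> luk_eval q e \<chi>"
      show "j \<le> luk_eval q e \<psi>"
      proof (cases "classical_on q W e")
        case True
        then show ?thesis
          using classical[OF e True] prems by simp
      next
        case False
        then have "luk_eval q e (subst \<sigma> \<phi>) < j"
          using \<sigma>[OF e] e1(3) by simp
        then show ?thesis
          using prems by simp
      qed
    qed
  qed
qed

lemma cpl_weaker_eq_extension:
  assumes q: "prime q" and j: "0 < j" "j \<le> q"
    and L: "consequence_relation L" "structural L" "weaker_eq (luk q j) L" "L \<Gamma> \<phi>"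
    and cpl: "luk 1 1 \<Gamma> \<phi>" and not_bar: "\<not> Lqbar j q \<Gamma> \<phi>"
  shows "weaker_eq (luk 1 1) L"
proof -
  have "\<not> luk q j \<Gamma> \<phi>" "luk_sat 1 1 \<Gamma>"
    using not_bar Lqbar_iff[OF j] by blast+
  then obtain e1 c where e1: "\<forall>n. e1 n \<le> q" "\<forall>\<gamma>\<in>\<Gamma>. j \<le> luk_eval q e1 \<gamma>" "luk_eval q e1 \<phi> < j"
    and c: "\<forall>n. c n \<le> 1" "\<forall>\<gamma>\<in>\<Gamma>. 1 \<le> luk_eval 1 c \<gamma>"
    unfolding luk_iff luk_sat_iff by (auto simp: not_le)
  show ?thesis
  proof (rule weaker_eq_if_finite[OF L(1)])
    show "finitary (luk 1 1)"
      using finitary_structural_logic_luk unfolding finitary_structural_logic_def by blast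
  next
    fix \<Delta> \<psi>
    assume "finite \<Delta>" and cpl_rule: "luk 1 1 \<Delta> \<psi>"
    let ?W = "vars \<psi> \<union> \<Union> (vars ` \<Delta>)"
    show "L \<Delta> \<psi>"
    proof (rule derivable_in_extension[OF q L e1, where c="\<lambda>n. q * c n" and W="?W"])
      have "c n = 0 \<or> c n = 1" for n
        using c(1)[rule_format, of n] by linarith
      then show "\<forall>n. q * c n = 0 \<or> q * c n = q"
        by (metis mult_0_right mult_1_right)
      show "finite ?W"
        using \<open>finite \<Delta>\<close> by (simp add: finite_vars)
    next
      fix e
      assume "\<forall>n. e n \<le> q" and cl: "classical_on q ?W e" and prems: "\<forall>\<delta>\<in>\<Delta>. j \<le> luk_eval q e \<delta>"
      let ?c = "\<lambda>n. if e n = q then 1 else 0 :: nat"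
      have "1 \<le> luk_eval 1 ?c \<delta>" if "\<delta> \<in> \<Delta>" for \<delta>
        using prems that luk_designated_classical[OF j cl, of \<delta>] by auto
      then have "1 \<le> luk_eval 1 ?c \<psi>"
        using cpl_rule[unfolded luk_iff, THEN spec[of _ ?c]] by simp
      then have "j \<le> luk_eval q e \<psi>"
        using luk_designated_classical[OF j cl, of \<psi>] by simp
      moreover have "\<forall>\<gamma>\<in>\<Gamma>. j \<le> luk_eval q (\<lambda>n. q * c n) \<gamma>"
        using c luk_designated_scale[OF j c(1)] by blast
      ultimately show "(\<forall>\<gamma>\<in>\<Gamma>. j \<le> luk_eval q (\<lambda>n. q * c n) \<gamma>) \<and> j \<le> luk_eval q e \<psi>"
        by blast
    qed
  qed
qed

lemma Lqbar_weaker_eq_extension: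
  assumes q: "prime q" and j: "0 < j" "j \<le> q"
    and L: "consequence_relation L" "structural L" "weaker_eq (luk q j) L" "L \<Gamma> \<phi>"
    and bar: "Lqbar j q \<Gamma> \<phi>" and not_luk: "\<not> luk q j \<Gamma> \<phi>"
  shows "weaker_eq (Lqbar j q) L"
proof -
  obtain e1 where e1: "\<forall>n. e1 n \<le> q" "\<forall>\<gamma>\<in>\<Gamma>. j \<le> luk_eval q e1 \<gamma>" "luk_eval q e1 \<phi> < j"
    using not_luk unfolding luk_iff by (auto simp: not_le)
  show ?thesis
  proof (rule weaker_eq_if_finite[OF L(1)])
    show "finitary (Lqbar j q)"
      using finitary_structural_logic_Lqbar j unfolding finitary_structural_logic_def by simp
  next
    fix \<Delta> \<psi>
    assume "finite \<Delta>" and bar_rule: "Lqbar j q \<Delta> \<psi>"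
    show "L \<Delta> \<psi>"
    proof (cases "luk q j \<Delta> \<psi>")
      case True
      then show ?thesis
        using L(3) unfolding weaker_eq_def by blast
    next
      case False
      then have unsat: "\<not> luk_sat 1 1 \<Delta>"
        using bar_rule Lqbar_iff[OF j] by blast
      let ?W = "\<Union> (vars ` \<Delta>)"
      show ?thesis
      proof (rule derivable_in_extension[OF q L e1, where c="\<lambda>_. 0" and W="?W"])
        show "finite ?W"
          using \<open>finite \<Delta>\<close> by (simp add: finite_vars)
      next
        fix e
        assume "\<forall>n. e n \<le> q" and cl: "classical_on q ?W e" and prems: "\<forall>\<delta>\<in>\<Delta>. j \<le> luk_eval q e \<delta>"
        let ?c = "\<lambda>n. if e n = q then 1 else 0 :: nat"
        have "\<forall>\<delta>\<in>\<Delta>. 1 \<le> luk_eval 1 ?c \<delta>"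
          using prems luk_designated_classical[OF j cl] by auto
        moreover have "\<forall>n. ?c n \<le> 1"
          by simp
        ultimately have "luk_sat 1 1 \<Delta>"
          unfolding luk_sat_iff by (intro exI[of _ ?c] conjI)
        with unsat show "(\<forall>\<gamma>\<in>\<Gamma>. j \<le> luk_eval q (\<lambda>_. 0) \<gamma>) \<and> j \<le> luk_eval q e \<psi>"
          by blast
      qed simp
    qed
  qed
qed

text \<open>\<open>\<tau>\<close> defines the indicator of the classical values in \<open>{0..q}\<close>: a classical tautology
  that fails at the value \<open>1/q\<close>, so \<open>\<tau>\<close> separates \<open>bar L\<^sup>j\<^sub>q\<close> from \<open>CPL\<close>, and \<open>\<not>\<tau>\<close> (classically unsatisfiable, but
  satisfiable at \<open>1/q\<close>) separates \<open>L\<^sup>j\<^sub>q\<close> from \<open>bar L\<^sup>j\<^sub>q\<close>.\<close>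

lemma Lqbar_separating_rules:
  assumes q: "2 \<le> q" and j: "0 < j" "j \<le> q"
  obtains \<tau> where "luk 1 1 {} \<tau>" "\<not> Lqbar j q {} \<tau>"
    "Lqbar j q {Neg \<tau>} (Neg (Imp (Var 0) (Var 0)))" "\<not> luk q j {Neg \<tau>} (Neg (Imp (Var 0) (Var 0)))"
proof -
  obtain \<tau> where \<tau>: "\<And>e. \<forall>n. e n \<le> q \<Longrightarrow> luk_eval q e \<tau> = classical_indicator q (e 0)"
    using unary_definable_classical_indicator[of q] unfolding unary_definable_def definable_def by blast
  have tautology: "luk_eval 1 c \<tau> = 1" if c: "\<forall>n. c n \<le> 1" for c
  proof -
    have "c 0 = 0 \<or> c 0 = 1"
      using c[rule_format, of 0] by linarith
    then have "luk_eval q (\<lambda>n. q * c n) \<tau> = q"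
      using \<tau>[of "\<lambda>n. q * c n"] c by (auto simp: classical_indicator_eq)
    then have "q * luk_eval 1 c \<tau> = q * 1"
      by (simp add: luk_eval_scale[OF c])
    then show ?thesis
      using q by simp
  qed
  have one: "\<forall>n. (\<lambda>_. 1) n \<le> q"
    using q by simp
  have refuted: "luk_eval q (\<lambda>_. 1) \<tau> = 0"
    using \<tau>[OF one] q by (simp add: classical_indicator_eq)
  have cpl: "luk 1 1 {} \<tau>"
    unfolding luk_iff using tautology by simp
  have not_luk: "\<not> luk q j {} \<tau>"
    unfolding luk_iff not_all by (intro exI[of _ "\<lambda>_. 1"]) (use one refuted j in simp)
  have "luk_sat 1 1 {}"
    unfolding luk_sat_iff by (rule exI[of _ "\<lambda>_. 0"]) simp
  then have not_bar: "\<not> Lqbar j q {} \<tau>"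
    using not_luk Lqbar_iff[OF j] by blast
  have "\<not> luk_sat 1 1 {Neg \<tau>}"
    unfolding luk_sat_iff
  proof
    assume "\<exists>c. (\<forall>n. c n \<le> 1) \<and> (\<forall>\<psi>\<in>{Neg \<tau>}. 1 \<le> luk_eval 1 c \<psi>)"
    then obtain c where "\<forall>n. c n \<le> 1" "1 \<le> luk_eval 1 c (Neg \<tau>)"
      by blast
    then show False
      using tautology by simp
  qed
  then have bar: "Lqbar j q {Neg \<tau>} (Neg (Imp (Var 0) (Var 0)))"
    using Lqbar_iff[OF j] by blast
  have "\<not> luk q j {Neg \<tau>} (Neg (Imp (Var 0) (Var 0)))"
    unfolding luk_iff not_all by (intro exI[of _ "\<lambda>_. 1"]) (use one refuted j in simp)
  with cpl not_bar bar show ?thesis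
    using that by blast
qed

lemma Lqbar_strictly_between:
  assumes q: "prime q" and j: "0 < j" "j \<le> q"
  shows "strictly_weaker (luk q j) (Lqbar j q)" and "strictly_weaker (Lqbar j q) (luk 1 1)"
proof -
  obtain \<tau> where \<tau>: "luk 1 1 {} \<tau>" "\<not> Lqbar j q {} \<tau>"
    "Lqbar j q {Neg \<tau>} (Neg (Imp (Var 0) (Var 0)))" "\<not> luk q j {Neg \<tau>} (Neg (Imp (Var 0) (Var 0)))"
    using Lqbar_separating_rules[OF prime_ge_2_nat[OF q] j] by blast
  show "strictly_weaker (luk q j) (Lqbar j q)"
    unfolding strictly_weaker_def using luk_weaker_eq_Lqbar[OF j] \<tau>(3,4) by metis
  show "strictly_weaker (Lqbar j q) (luk 1 1)"
    unfolding strictly_weaker_def using Lqbar_weaker_eq_cpl[OF j] \<tau>(1,2) by metis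
qed

lemma between_eq_Lqbar:
  assumes q: "prime q" and j: "0 < j" "j \<le> q" and L: "finitary_structural_logic L"
  shows "strictly_weaker (luk q j) L \<and> strictly_weaker L (luk 1 1) \<longleftrightarrow> L = Lqbar j q"
proof
  assume "strictly_weaker (luk q j) L \<and> strictly_weaker L (luk 1 1)"
  then have above: "weaker_eq (luk q j) L" "L \<noteq> luk q j" and below: "weaker_eq L (luk 1 1)" "L \<noteq> luk 1 1"
    unfolding strictly_weaker_def by auto
  have cr: "consequence_relation L" and st: "structural L"
    using L unfolding finitary_structural_logic_def by auto
  have below_bar: "weaker_eq L (Lqbar j q)"
  proof (rule ccontr)
    assume "\<not> weaker_eq L (Lqbar j q)"
    then obtain \<Gamma> \<phi> where rule: "L \<Gamma> \<phi>" "\<not> Lqbar j q \<Gamma> \<phi>"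
      unfolding weaker_eq_def by blast
    then have "luk 1 1 \<Gamma> \<phi>"
      using below(1) unfolding weaker_eq_def by blast
    then have "weaker_eq (luk 1 1) L"
      using cpl_weaker_eq_extension[OF q j cr st above(1) rule(1) _ rule(2)] by blast
    then show False
      using weaker_eq_antisym below by blast
  qed
  have "\<not> weaker_eq L (luk q j)"
    using weaker_eq_antisym[OF above(1)] above(2) by blast
  then obtain \<Gamma> \<phi> where rule: "L \<Gamma> \<phi>" "\<not> luk q j \<Gamma> \<phi>"
    unfolding weaker_eq_def by blast
  then have "Lqbar j q \<Gamma> \<phi>"
    using below_bar unfolding weaker_eq_def by blast
  then have "weaker_eq (Lqbar j q) L"
    using Lqbar_weaker_eq_extension[OF q j cr st above(1) rule(1) _ rule(2)] by blast
  then show "L = Lqbar j q"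
    using weaker_eq_antisym below_bar by blast
next
  assume "L = Lqbar j q"
  then show "strictly_weaker (luk q j) L \<and> strictly_weaker L (luk 1 1)"
    using Lqbar_strictly_between[OF q j] by simp
qed

lemma strongly_maximal_Lqbar:
  assumes q: "prime q" and j: "0 < j" "j \<le> q"
  shows "strongly_maximal (Lqbar j q) (luk 1 1)"
  unfolding strongly_maximal_def
proof (intro conjI allI impI)
  show "strictly_weaker (Lqbar j q) (luk 1 1)"
    by (rule Lqbar_strictly_between[OF assms])
  fix \<Gamma> \<phi>
  assume rule: "finite \<Gamma> \<and> luk 1 1 \<Gamma> \<phi> \<and> \<not> Lqbar j q \<Gamma> \<phi>"
  have cpl: "consequence_relation (luk 1 1)" "structural (luk 1 1)"
    using finitary_structural_logic_luk unfolding finitary_structural_logic_def by blast+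
  show "extend_by_rule (Lqbar j q) \<Gamma> \<phi> = luk 1 1"
  proof (intro ext iffI)
    fix \<Delta> \<psi>
    assume "extend_by_rule (Lqbar j q) \<Gamma> \<phi> \<Delta> \<psi>"
    then show "luk 1 1 \<Delta> \<psi>"
      unfolding extend_by_rule_def using cpl Lqbar_weaker_eq_cpl[OF j] rule
      by (blast dest: spec[of _ "luk 1 1"])
  next
    fix \<Delta> \<psi>
    assume cpl_rule: "luk 1 1 \<Delta> \<psi>"
    show "extend_by_rule (Lqbar j q) \<Gamma> \<phi> \<Delta> \<psi>"
      unfolding extend_by_rule_def
    proof (intro allI impI)
      fix L
      assume L: "consequence_relation L \<and> structural L \<and> weaker_eq (Lqbar j q) L \<and> L \<Gamma> \<phi>"
      then have "weaker_eq (luk q j) L"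
        using luk_weaker_eq_Lqbar[OF j] unfolding weaker_eq_def by blast
      then have "weaker_eq (luk 1 1) L"
        using cpl_weaker_eq_extension[OF q j] L rule by blast
      then show "L \<Delta> \<psi>"
        using cpl_rule unfolding weaker_eq_def by blast
    qed
  qed
qed

lemma strongly_maximal_eq_Lqbar:
  assumes q: "prime q" and j: "0 < j" "j \<le> q"
    and L: "finitary_structural_logic L" "strongly_maximal L (luk 1 1)" "weaker_eq (luk q j) L"
  shows "L = Lqbar j q"
proof -
  have "L \<noteq> luk q j"
  proof
    assume L_luk: "L = luk q j"
    obtain \<tau> where \<tau>: "luk 1 1 {} \<tau>" "\<not> Lqbar j q {} \<tau>"
      "Lqbar j q {Neg \<tau>} (Neg (Imp (Var 0) (Var 0)))" "\<not> luk q j {Neg \<tau>} (Neg (Imp (Var 0) (Var 0)))"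
      using Lqbar_separating_rules[OF prime_ge_2_nat[OF q] j] by blast
    have "luk 1 1 {Neg \<tau>} (Neg (Imp (Var 0) (Var 0)))"
      using \<tau>(3) Lqbar_weaker_eq_cpl[OF j] unfolding weaker_eq_def by blast
    then have "extend_by_rule (luk q j) {Neg \<tau>} (Neg (Imp (Var 0) (Var 0))) = luk 1 1"
      using L(2) L_luk \<tau>(4) unfolding strongly_maximal_def by simp
    then have "extend_by_rule (luk q j) {Neg \<tau>} (Neg (Imp (Var 0) (Var 0))) {} \<tau>"
      using \<tau>(1) by simp
    moreover have "consequence_relation (Lqbar j q)" "structural (Lqbar j q)"
      using finitary_structural_logic_Lqbar j unfolding finitary_structural_logic_def by simp_all
    ultimately have "Lqbar j q {} \<tau>"
      using \<tau>(3) luk_weaker_eq_Lqbar[OF j] unfolding extend_by_rule_def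
      by (blast dest: spec[of _ "Lqbar j q"])
    with \<tau>(2) show False ..
  qed
  then have "strictly_weaker (luk q j) L" "strictly_weaker L (luk 1 1)"
    using L(2,3) unfolding strongly_maximal_def strictly_weaker_def by auto
  then show ?thesis
    using between_eq_Lqbar[OF q j L(1)] by blast
qed

theorem corollary5p8:
  fixes q j :: nat
  assumes "prime q" and "0 < j" and "j \<le> q"
  shows "finitary_structural_logic (Lqbar j q) \<and>
         strongly_maximal (Lqbar j q) CPL \<and> weaker_eq (Lq j q) (Lqbar j q) \<and>
         (\<forall>L. finitary_structural_logic L \<and> strongly_maximal L CPL \<and> weaker_eq (Lq j q) L
              \<longrightarrow> L = Lqbar j q) \<and>
         (\<forall>L. finitary_structural_logic L \<longrightarrow>
              (strictly_weaker (Lq j q) L \<and> strictly_weaker L CPL \<longleftrightarrow> L = Lqbar j q))"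
proof -
  have "0 < q"
    using assms(2,3) by simp
  show ?thesis
    unfolding Lq_eq_luk[OF \<open>0 < q\<close>] CPL_eq_luk
  proof (intro conjI allI impI)
    show "finitary_structural_logic (Lqbar j q)"
      by (rule finitary_structural_logic_Lqbar[OF \<open>0 < q\<close>])
    show "strongly_maximal (Lqbar j q) (luk 1 1)"
      by (rule strongly_maximal_Lqbar[OF assms])
    show "weaker_eq (luk q j) (Lqbar j q)"
      by (rule luk_weaker_eq_Lqbar[OF assms(2,3)])
    show "L = Lqbar j q"
      if "finitary_structural_logic L \<and> strongly_maximal L (luk 1 1) \<and> weaker_eq (luk q j) L" for L
      using strongly_maximal_eq_Lqbar[OF assms] that by blast
    show "strictly_weaker (luk q j) L \<and> strictly_weaker L (luk 1 1) \<longleftrightarrow> L = Lqbar j q"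
      if "finitary_structural_logic L" for L
      by (rule between_eq_Lqbar[OF assms that])
  qed
qed

end
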